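(* For every integer $n\ge 1$, as rational functions of $x,x_0,x_1$, $$P_n(x;q^{\frac12}x_0,x_1)=P_n(x;x_0,x_1)+\lambda_n(x_0,x_1)\,P_{n-1}(x;x_0,x_1),$$ where $$\lambda_n(x_0,x_1)=\frac{q^{-\frac12}(1-q^n)^2\left(1-\frac{q^n}{x_1^2}\right)^2}{x_0^2\left(1-\frac{q^{2n-1}}{x_0^2x_1^2}\right)\left(1-\frac{q^{2n}}{x_0^2x_1^2}\right)}.$$
   Context: Let $q$ be a complex parameter with $0<|q|<1$, with a fixed choice of $q^{1/4}$ and $q^{k/4}:=(q^{1/4})^k$; $x,x_0,x_1$ are indeterminates. Notation: $(y)_n=(y;q)_n=\prod_{i=1}^{n}(1-yq^{i-1})$, $(y_1,\dots,y_k)_n=(y_1)_n\cdots(y_k)_n$. For $n\ge 0$ define the (reduced) Askey–Wilson polynomial $$P_n(x;x_0,x_1)=(-1)^nq^{-\frac n2}\frac{\left(q,\frac{q}{x_0^2},\frac{q}{x_1^2}\right)_n}{\left(\frac{q^{n+1}}{x_0^2x_1^2}\right)_n}\sum_{k=0}^{n}q^k\frac{\left(q^{-n},\frac{q^{n+1}}{x_0^2x_1^2}\right)_k}{\left(q,q,\frac{q}{x_0^2},\frac{q}{x_1^2}\right)_k}\,\left(-q^{\frac12}x,-q^{\frac12}x^{-1}\right)_k .$$ This is the Askey–Wilson polynomial $P_n^{(a,b,c,d)}(x)=\frac{(ab,ac,ad)_n}{a^n(abcdq^{n-1})_n}\sum_{k=0}^n\frac{(q^{-n},q^{n-1}abcd,ax,ax^{-1})_k}{(q,ab,ac,ad)_k}q^k$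 with $(a,b,c,d)=(-q^{1/2},-q^{1/2},-q^{1/2}/x_0^2,-q^{1/2}/x_1^2)$; it is a symmetric Laurent polynomial in $x$ of the form $x^n+x^{-n}+$(lower terms). *)

theory Defs
  imports Complex_Main
begin

definition qpoch :: "complex \<Rightarrow> complex \<Rightarrow> nat \<Rightarrow> complex" where
  "qpoch q y n = (\<Prod>i<n. (1 - y * q ^ i))"

text \<open>Reduced Askey-Wilson polynomial P_n(x;x0,x1). The parameter r is the fixed
  choice of q^(1/4); q = r^4, q^(1/2) = r^2, q^(-n/2) = r^(-2n).\<close>
definition AWP :: "complex \<Rightarrow> nat \<Rightarrow> complex \<Rightarrow> complex \<Rightarrow> complex \<Rightarrow> complex" where
  "AWP r n x x0 x1 =
    (let q = r ^ 4 in
      (-1) ^ n * inverse (r ^ (2 * n)) *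
      (qpoch q q n * qpoch q (q / x0\<^sup>2) n * qpoch q (q / x1\<^sup>2) n)
        / qpoch q (q ^ (n + 1) / (x0\<^sup>2 * x1\<^sup>2)) n *
      (\<Sum>k\<le>n. q ^ k *
         (qpoch q (inverse (q ^ n)) k * qpoch q (q ^ (n + 1) / (x0\<^sup>2 * x1\<^sup>2)) k)
         / (qpoch q q k * qpoch q q k * qpoch q (q / x0\<^sup>2) k * qpoch q (q / x1\<^sup>2) k)
         * (qpoch q (- (r ^ 2 * x)) k * qpoch q (- (r ^ 2 / x)) k)))"

definition AWlambda :: "complex \<Rightarrow> nat \<Rightarrow> complex \<Rightarrow> complex \<Rightarrow> complex" where
  "AWlambda r n x0 x1 =
    (let q = r ^ 4 in
      inverse (r ^ 2) * (1 - q ^ n)\<^sup>2 * (1 - q ^ n / x1\<^sup>2)\<^sup>2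
      / (x0\<^sup>2 * (1 - q ^ (2 * n - 1) / (x0\<^sup>2 * x1\<^sup>2)) * (1 - q ^ (2 * n) / (x0\<^sup>2 * x1\<^sup>2))))"

end

theory Submission
  imports Defs
begin

(* Expanding P_n in the basis (-q^(1/2) x, -q^(1/2)/x; q)_k, the theorem becomes an identity
   between coefficients c_(n,k)(a), where a = 1/x0^2, b = 1/x1^2, and replacing x0 by
   q^(1/2) x0 replaces a by a/q.  With t = q^n and s = q^k, the relation
   (1 - y) (yq; q)_n = (y; q)_n (1 - y q^n) gives
     c_(n,k)(a/q) (1 - a t) (1 - t s a b) = c_(n,k)(a) (1 - a s) (1 - t^2 a b),
     lambda_n c_(n-1,k)(a) (1 - a t) (1 - t s a b) = c_(n,k)(a) a (1 - t b) (t - s),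
   and the theorem reduces to the polynomial identity
     (1 - a s) (1 - t^2 a b) = (1 - a t) (1 - t s a b) + a (1 - t b) (t - s). *)

lemma qpoch_Suc: "qpoch q y (Suc n) = qpoch q y n * (1 - y * q ^ n)"
  by (simp add: qpoch_def)

lemma qpoch_Suc_left: "qpoch q y (Suc n) = (1 - y) * qpoch q (y * q) n"
  unfolding qpoch_def by (simp add: prod.lessThan_Suc_shift ac_simps del: prod.lessThan_Suc)

lemma qpoch_shift: "(1 - y) * qpoch q (y * q) n = qpoch q y n * (1 - y * q ^ n)"
  by (metis qpoch_Suc qpoch_Suc_left)

lemma qpoch_eq_0_iff: "qpoch q y n = 0 \<longleftrightarrow> (\<exists>i<n. y * q ^ i = 1)"
  by (auto simp: qpoch_def)

lemma qpoch_nonzero_prefix: "qpoch q y n \<noteq> 0 \<Longrightarrow> k \<le> n \<Longrightarrow> qpoch q y k \<noteq> 0"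
  by (auto simp: qpoch_eq_0_iff)

lemma qpoch_nonzero_shift:
  "qpoch q y (Suc n) \<noteq> 0 \<Longrightarrow> k \<le> n \<Longrightarrow> qpoch q (y * q) k \<noteq> 0"
  by (auto simp: qpoch_Suc_left dest: qpoch_nonzero_prefix)

lemma qpoch_Suc_nonzero:
  assumes "qpoch q y n \<noteq> 0" "qpoch q (y * q) n \<noteq> 0" "0 < n"
  shows "qpoch q y (Suc n) \<noteq> 0"
  using assms by (auto simp: qpoch_Suc_left qpoch_eq_0_iff)

definition aw_basis :: "complex \<Rightarrow> nat \<Rightarrow> complex \<Rightarrow> complex" where
  "aw_basis r k x = qpoch (r ^ 4) (- (r ^ 2 * x)) k * qpoch (r ^ 4) (- (r ^ 2 / x)) k"

definition aw_coeff ::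
    "complex \<Rightarrow> complex \<Rightarrow> nat \<Rightarrow> nat \<Rightarrow> complex \<Rightarrow> complex \<Rightarrow> complex" where
  "aw_coeff q h n k a b =
    (- h) ^ n * (qpoch q q n * qpoch q (a * q) n * qpoch q (b * q) n)
      / qpoch q (q ^ n * a * b * q) n *
    (q ^ k * (qpoch q (inverse (q ^ n)) k * qpoch q (q ^ n * a * b * q) k)
      / (qpoch q q k * qpoch q q k * qpoch q (a * q) k * qpoch q (b * q) k))"

definition aw_lambda ::
    "complex \<Rightarrow> complex \<Rightarrow> nat \<Rightarrow> complex \<Rightarrow> complex \<Rightarrow> complex" where
  "aw_lambda q h n a b = h * a * (1 - q ^ n)\<^sup>2 * (1 - q ^ n * b)\<^sup>2
     / ((1 - q ^ (2 * n - 1) * a * b) * (1 - q ^ (2 * n) * a * b))"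

lemma AWP_eq_sum:
  "AWP r n x x0 x1 =
    (\<Sum>k\<le>n. aw_coeff (r ^ 4) (inverse (r ^ 2)) n k (1 / x0\<^sup>2) (1 / x1\<^sup>2)
      * aw_basis r k x)"
proof -
  have "(-1) ^ n * inverse (r ^ (2 * n)) = (- inverse (r ^ 2)) ^ n"
    by (simp add: power_minus' power_inverse power_mult)
  moreover have "r ^ 4 / x0\<^sup>2 = 1 / x0\<^sup>2 * r ^ 4" "r ^ 4 / x1\<^sup>2 = 1 / x1\<^sup>2 * r ^ 4"
    "(r ^ 4) ^ (n + 1) / (x0\<^sup>2 * x1\<^sup>2)
       = (r ^ 4) ^ n * (1 / x0\<^sup>2) * (1 / x1\<^sup>2) * r ^ 4"
    by simp_all
  ultimately show ?thesis
    unfolding AWP_def aw_coeff_def aw_basis_def Let_def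
    by (simp only:) (simp add: sum_distrib_left mult.assoc)
qed

lemma AWlambda_eq:
  "AWlambda r n x0 x1 = aw_lambda (r ^ 4) (inverse (r ^ 2)) n (1 / x0\<^sup>2) (1 / x1\<^sup>2)"
proof -
  have "(r ^ 4) ^ n / x1\<^sup>2 = (r ^ 4) ^ n * (1 / x1\<^sup>2)"
    "(r ^ 4) ^ j / (x0\<^sup>2 * x1\<^sup>2) = (r ^ 4) ^ j * (1 / x0\<^sup>2) * (1 / x1\<^sup>2)"
    for j
    by simp_all
  then show ?thesis
    unfolding AWlambda_def aw_lambda_def Let_def
    by (simp only:) (simp add: divide_inverse ac_simps)
qed

lemma aw_coeff_eq_0: "q \<noteq> 0 \<Longrightarrow> m < k \<Longrightarrow> aw_coeff q h m k a b = 0"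
  unfolding aw_coeff_def by (auto simp: qpoch_eq_0_iff)

lemma aw_coeff_shift:
  fixes q h a b :: complex
  assumes "q \<noteq> 0" "qpoch q a k \<noteq> 0" "qpoch q (a * q) k \<noteq> 0"
    "qpoch q (q ^ n * a * b) n \<noteq> 0" "qpoch q (q ^ n * a * b * q) n \<noteq> 0"
  shows "aw_coeff q h n k (a / q) b * ((1 - a * q ^ n) * (1 - q ^ n * q ^ k * a * b))
       = aw_coeff q h n k a b * ((1 - a * q ^ k) * (1 - q ^ n * q ^ n * a * b))"
proof -
  define t where "t = q ^ n"
  define s where "s = q ^ k"
  define X where "X = (- h) ^ n * qpoch q q n * qpoch q (b * q) n * q ^ k
    * qpoch q (inverse t) k / (qpoch q q k * qpoch q q k * qpoch q (b * q) k)"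
  define An where "An = qpoch q a n"
  define Ak where "Ak = qpoch q a k"
  define A'n where "A'n = qpoch q (a * q) n"
  define A'k where "A'k = qpoch q (a * q) k"
  define Cn where "Cn = qpoch q (t * a * b) n"
  define Ck where "Ck = qpoch q (t * a * b) k"
  define C'n where "C'n = qpoch q (t * a * b * q) n"
  define C'k where "C'k = qpoch q (t * a * b * q) k"
  have rels: "(1 - a) * A'n = An * (1 - a * t)" "(1 - a) * A'k = Ak * (1 - a * s)"
    "(1 - t * a * b) * C'n = Cn * (1 - t * a * b * t)"
    "(1 - t * a * b) * C'k = Ck * (1 - t * a * b * s)"
    unfolding An_def Ak_def A'n_def A'k_def Cn_def Ck_def C'n_def C'k_def t_def s_def
    by (rule qpoch_shift)+
  have cancel: "a / q * q = a" "q ^ n * (a / q) * b * q = t * a * b"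
    using \<open>q \<noteq> 0\<close> by (simp_all add: t_def)
  then have shifted: "aw_coeff q h n k (a / q) b = X * (An / Cn) * (Ck / Ak)"
    unfolding aw_coeff_def X_def An_def Ak_def Cn_def Ck_def t_def
    by (simp only: cancel) (simp add: divide_inverse ac_simps)
  have unshifted: "aw_coeff q h n k a b = X * (A'n / C'n) * (C'k / A'k)"
    unfolding aw_coeff_def X_def A'n_def A'k_def C'n_def C'k_def t_def
    by (simp add: divide_inverse ac_simps)
  have nonzero: "Ak \<noteq> 0" "A'k \<noteq> 0" "Cn \<noteq> 0" "C'n \<noteq> 0"
    using assms unfolding Ak_def A'k_def Cn_def C'n_def t_def by simp_all
  have "An * (1 - a * t) * (Ck * (1 - t * a * b * s)) * (A'k * C'n)
      = A'n * C'k * (((1 - a) * A'k) * ((1 - t * a * b) * C'n))"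
    using rels(1,4) by (metis (no_types) mult.assoc mult.commute)
  also have "\<dots> = A'n * C'k * (Ak * (1 - a * s)) * (Cn * (1 - t * a * b * t))"
    using rels(2,3) by (simp add: ac_simps)
  finally have "An / Cn * (Ck / Ak) * ((1 - a * t) * (1 - t * s * a * b))
      = A'n / C'n * (C'k / A'k) * ((1 - a * s) * (1 - t * t * a * b))"
    using nonzero by (simp add: field_simps)
  then show ?thesis
    unfolding shifted unshifted t_def[symmetric] s_def[symmetric] by (simp only: mult.assoc)
qed

lemma aw_lambda_Suc:
  "aw_lambda q h (Suc m) a b = h * a * (1 - q ^ Suc m)\<^sup>2 * (1 - q ^ Suc m * b)\<^sup>2
     / ((1 - q ^ Suc m * a * b * q ^ m) * (1 - q ^ Suc m * a * b * q ^ Suc m))"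
proof -
  have "q ^ (2 * Suc m - 1) = q ^ Suc m * q ^ m" "q ^ (2 * Suc m) = q ^ Suc m * q ^ Suc m"
    by (simp_all add: power_add[symmetric] mult_2 flip: power_Suc)
  then show ?thesis
    unfolding aw_lambda_def by (simp only:) (simp only: ac_simps)
qed

lemma aw_coeff_step:
  fixes q h a b :: complex
  assumes "q \<noteq> 0" "qpoch q (q ^ Suc m * a * b) (Suc (Suc m)) \<noteq> 0"
  shows "aw_lambda q h (Suc m) a b * aw_coeff q h m k a b
           * ((1 - a * q ^ Suc m) * (1 - q ^ Suc m * q ^ k * a * b))
       = aw_coeff q h (Suc m) k a b * (a * (1 - q ^ Suc m * b) * (q ^ Suc m - q ^ k))"
proof -
  define t where "t = q ^ Suc m"
  define s where "s = q ^ k"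
  define Z where "Z = (- h) ^ m * qpoch q q m * qpoch q (a * q) m * qpoch q (b * q) m * q ^ k
    / (qpoch q q k * qpoch q q k * qpoch q (a * q) k * qpoch q (b * q) k)"
  define Cm where "Cm = qpoch q (t * a * b) m"
  define Ck where "Ck = qpoch q (t * a * b) k"
  define C'n where "C'n = qpoch q (t * a * b * q) (Suc m)"
  define C'k where "C'k = qpoch q (t * a * b * q) k"
  define Ik where "Ik = qpoch q (inverse t) k"
  define I'k where "I'k = qpoch q (inverse t * q) k"
  define W1 where "W1 = 1 - t * a * b * q ^ m"
  define W2 where "W2 = 1 - t * a * b * t"
  have t0: "t \<noteq> 0" using \<open>q \<noteq> 0\<close> by (simp add: t_def)
  have rel_C: "(1 - t * a * b) * C'k = Ck * (1 - t * a * b * s)"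
    unfolding C'k_def Ck_def s_def by (rule qpoch_shift)
  have "(1 - inverse t) * I'k = Ik * (1 - inverse t * s)"
    unfolding I'k_def Ik_def s_def by (rule qpoch_shift)
  then have rel_I: "(t - 1) * I'k = Ik * (t - s)"
    using t0 by (simp add: field_simps)
  have split_last: "qpoch q (t * a * b) (Suc (Suc m)) = Cm * W1 * W2"
    unfolding Cm_def W1_def W2_def t_def by (simp add: qpoch_Suc)
  have split_first: "qpoch q (t * a * b) (Suc (Suc m)) = (1 - t * a * b) * C'n"
    unfolding C'n_def by (rule qpoch_Suc_left)
  have nonzero: "Cm \<noteq> 0" "W1 \<noteq> 0" "W2 \<noteq> 0" "1 - t * a * b \<noteq> 0" "C'n \<noteq> 0"
    using assms(2)[folded t_def, unfolded split_last]
      assms(2)[folded t_def, unfolded split_first] by simp_all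
  have lambda: "aw_lambda q h (Suc m) a b = h * a * (1 - t)\<^sup>2 * (1 - t * b)\<^sup>2 / (W1 * W2)"
    unfolding aw_lambda_Suc W1_def W2_def t_def ..
  have "q ^ m * a * b * q = t * a * b" "inverse (q ^ m) = inverse t * q"
    using \<open>q \<noteq> 0\<close> unfolding t_def by simp_all
  then have coeff_m: "aw_coeff q h m k a b = Z * (I'k * Ck / Cm)"
    unfolding aw_coeff_def Z_def Cm_def Ck_def I'k_def
    by (simp only:) (simp add: divide_inverse ac_simps)
  have "qpoch q q (Suc m) = qpoch q q m * (1 - t)"
    "qpoch q (a * q) (Suc m) = qpoch q (a * q) m * (1 - a * t)"
    "qpoch q (b * q) (Suc m) = qpoch q (b * q) m * (1 - b * t)"
    unfolding t_def by (simp_all add: qpoch_Suc ac_simps)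
  then have coeff_Suc_m: "aw_coeff q h (Suc m) k a b
      = Z * (- h * (1 - t) * (1 - a * t) * (1 - b * t)) * (Ik * C'k / C'n)"
    unfolding aw_coeff_def Z_def C'n_def C'k_def Ik_def t_def[symmetric]
    by (simp only:) (simp add: divide_inverse ac_simps)
  have "h * a * (1 - t)\<^sup>2 * (1 - t * b)\<^sup>2 / (W1 * W2) * (I'k * Ck / Cm)
        * ((1 - a * t) * (1 - t * s * a * b))
      = - h * (1 - t) * (1 - a * t) * (1 - b * t) * (Ik * C'k / C'n)
        * (a * (1 - t * b) * (t - s))"
    using nonzero rel_C rel_I split_last[unfolded split_first]
    by (simp add: field_simps) algebra
  then show ?thesis
    unfolding lambda coeff_m coeff_Suc_m t_def[symmetric] s_def[symmetric]
    by (simp only: mult.assoc mult.left_commute[of _ Z])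
qed

lemma aw_coeff_contiguous:
  fixes q h a b :: complex
  assumes "q \<noteq> 0" "k \<le> Suc m"
    and a: "qpoch q a (Suc (Suc m)) \<noteq> 0"
    and ab: "qpoch q (q ^ Suc m * a * b) (Suc (Suc m)) \<noteq> 0"
  shows "aw_coeff q h (Suc m) k (a / q) b
       = aw_coeff q h (Suc m) k a b + aw_lambda q h (Suc m) a b * aw_coeff q h m k a b"
proof -
  define n where "n = Suc m"
  define t where "t = q ^ n"
  define s where "s = q ^ k"
  define D where "D = (1 - a * t) * (1 - t * s * a * b)"
  have "D \<noteq> 0"
    using a ab \<open>k \<le> Suc m\<close> unfolding D_def t_def s_def n_def
    by (auto simp: qpoch_eq_0_iff ac_simps)
  have shift: "aw_coeff q h n k (a / q) b * D
      = aw_coeff q h n k a b * ((1 - a * s) * (1 - t * t * a * b))"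
    unfolding D_def t_def s_def
  proof (rule aw_coeff_shift)
    show "qpoch q a k \<noteq> 0" "qpoch q (a * q) k \<noteq> 0"
      using a \<open>k \<le> Suc m\<close> qpoch_nonzero_prefix qpoch_nonzero_shift unfolding n_def
      by simp_all
    show "qpoch q (q ^ n * a * b) n \<noteq> 0" "qpoch q (q ^ n * a * b * q) n \<noteq> 0"
      using ab qpoch_nonzero_prefix qpoch_nonzero_shift unfolding n_def by simp_all
  qed fact
  have step: "aw_lambda q h n a b * aw_coeff q h m k a b * D
      = aw_coeff q h n k a b * (a * (1 - t * b) * (t - s))"
    unfolding D_def t_def s_def n_def using aw_coeff_step[OF \<open>q \<noteq> 0\<close> ab] .
  have "(1 - a * s) * (1 - t * t * a * b) = D + a * (1 - t * b) * (t - s)"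
    unfolding D_def by (simp add: algebra_simps)
  then have "aw_coeff q h n k (a / q) b * D
      = aw_coeff q h n k a b * (D + a * (1 - t * b) * (t - s))"
    using shift by simp
  also have "\<dots> = (aw_coeff q h n k a b + aw_lambda q h n a b * aw_coeff q h m k a b) * D"
    using step by (simp add: algebra_simps)
  finally show ?thesis
    using \<open>D \<noteq> 0\<close> unfolding n_def by simp
qed

theorem mainTheorem1:
  fixes r x x0 x1 :: complex and n :: nat
  assumes r: "r \<noteq> 0" "norm (r ^ 4) < 1"
    and n: "n \<ge> 1"
    and nz: "x \<noteq> 0" "x0 \<noteq> 0" "x1 \<noteq> 0"
    and d1: "qpoch (r ^ 4) (1 / x0\<^sup>2) n \<noteq> 0"
    and d2: "qpoch (r ^ 4) (r ^ 4 / x0\<^sup>2) n \<noteq> 0"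
    and d3: "qpoch (r ^ 4) (r ^ 4 / x1\<^sup>2) n \<noteq> 0"
    and d4: "qpoch (r ^ 4) ((r ^ 4) ^ n / (x0\<^sup>2 * x1\<^sup>2)) n \<noteq> 0"
    and d5: "qpoch (r ^ 4) ((r ^ 4) ^ (n + 1) / (x0\<^sup>2 * x1\<^sup>2)) n \<noteq> 0"
  shows "AWP r n x (r ^ 2 * x0) x1
           = AWP r n x x0 x1 + AWlambda r n x0 x1 * AWP r (n - 1) x x0 x1"
proof -
  (* Only r \<noteq> 0, n \<ge> 1, d1, d2, d4 and d5 are needed: the other denominators, (q; q)_k and
     (q/x1^2; q)_k, occur identically on both sides of every coefficient identity. *)
  obtain m where m: "n = Suc m" using n by (cases n) auto
  define q where "q = r ^ 4"
  define h where "h = inverse (r ^ 2)"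
  define a where "a = 1 / x0\<^sup>2"
  define b where "b = 1 / x1\<^sup>2"
  define c where "c = (\<lambda>n k a. aw_coeff q h n k a b)"
  have "q \<noteq> 0" using r by (simp add: q_def)
  have "qpoch q a (Suc n) \<noteq> 0"
    using d1 d2 n by (intro qpoch_Suc_nonzero) (simp_all add: q_def a_def)
  moreover have "qpoch q (q ^ n * a * b) (Suc n) \<noteq> 0"
    using d4 d5 n by (intro qpoch_Suc_nonzero) (simp_all add: q_def a_def b_def field_simps)
  ultimately have coeff: "c n k (a / q) = c n k a + aw_lambda q h n a b * c m k a"
    if "k \<le> n" for k
    using aw_coeff_contiguous[OF \<open>q \<noteq> 0\<close>] that unfolding c_def m by blast
  have "1 / (r ^ 2 * x0)\<^sup>2 = a / q"
    by (simp add: a_def q_def power_mult_distrib flip: power_mult)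
  then have "AWP r n x (r ^ 2 * x0) x1 = (\<Sum>k\<le>n. c n k (a / q) * aw_basis r k x)"
    unfolding AWP_eq_sum c_def q_def h_def b_def by simp
  also have "\<dots> = (\<Sum>k\<le>n. c n k a * aw_basis r k x)
      + aw_lambda q h n a b * (\<Sum>k\<le>n. c m k a * aw_basis r k x)"
    by (simp add: coeff distrib_right sum.distrib sum_distrib_left mult.assoc)
  also have "(\<Sum>k\<le>n. c m k a * aw_basis r k x) = (\<Sum>k\<le>m. c m k a * aw_basis r k x)"
    using aw_coeff_eq_0[OF \<open>q \<noteq> 0\<close>] unfolding m c_def by simp
  finally show ?thesis
    unfolding AWP_eq_sum AWlambda_eq c_def q_def h_def a_def b_def m by simp
qed

end
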